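(* Let $p\ge 1711$ be a prime such that $-1$ is a quadratic residue modulo $p$ and $2,3$ are quadratic non-residues modulo $p$. Let $R'=R\setminus\{\tfrac{p+3}{2},\tfrac{p-3}{2}\}$ (elements of $\mathbb{F}_p$, i.e. $R'=R\setminus\{3/2,-3/2\}$). Let $\vec D$ be the digraph with vertex set $R'$ whose edges are: for every triple $x,y,z\in R'$ with $2x=y+z\neq 3$, the edges $(x,y)$ and $(x,z)$; and for every pair $y\neq z$ in $R'$ with $y+z=3$, the edges $(1,y)$ and $(1,z)$. Then $\vec D$ is strongly connected. Equivalently, the system of inequalities in variables $(x_a)_{a\in R'}$ $$2x_a\le x_b+x_c\ \ (a,b,c\in R',\ 2a=b+c\neq3),\qquad 3x_1\le x_b+x_c\ \ (b,c\in R',\ b+c=3),\qquad x_a>0\ \ (a\in R')$$ is strongly connected in the sense that its associated digraph (edges from the left-hand index to each right-hand index of every inequality) is strongly connected.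
   Context: $R$ denotes the set of nonzero quadratic residues in $\mathbb{F}_p$ (note $1\in R'$). All arithmetic is in $\mathbb{F}_p$. *)

theory Defs
  imports "HOL-Number_Theory.Number_Theory"
begin

text \<open>Elements of F_p are represented by their canonical representatives in {0..p-1}.\<close>

definition QRset :: "int \<Rightarrow> int set" where
  "QRset p = {a \<in> {1..p - 1}. QuadRes p a}"

definition Rprime :: "int \<Rightarrow> int set" where
  "Rprime p = QRset p - {(p + 3) div 2, (p - 3) div 2}"

definition D_edges :: "int \<Rightarrow> (int \<times> int) set" where
  "D_edges p =
     {(x, y). x \<in> Rprime p \<and> y \<in> Rprime p \<and>
        (\<exists>z \<in> Rprime p. [2 * x = y + z] (mod p) \<and> \<not> [y + z = 3] (mod p))}
   \<union> {(x, y). x = 1 \<and> y \<in> Rprime p \<and>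
        (\<exists>z \<in> Rprime p. z \<noteq> y \<and> [y + z = 3] (mod p))}"

end

theory Submission
  imports Defs
begin

(*
  Let A be the set of vertices reachable from u.  It is closed under the midpoint moves
  a \<rightarrow> b (a, b, 2a - b \<in> R').  Counting with the Jacobsthal sums of the Legendre symbol, every
  a \<in> R has (p - 1)/4 out-neighbours b (b, 2a - b \<in> R) and every c \<in> R has (p - 1)/4
  in-neighbours x (x, 2x - c \<in> R).  Since R' misses only two points of R, A contains all but
  4 out-neighbours of each of its elements, and if A misses some c \<in> R' it also misses all but
  4 in-neighbours of c.  Hence (p - 17)/4 \<le> |A| \<le> (p + 15)/4, A nearly contains the
  out-neighbourhood of each of its points, and reflecting through a and then through b shows
  that every difference 2a - 2b (a, b \<in> A) is represented at least |A| - 24 times as x - x'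
  with x, x' \<in> A.  By Cauchy-Davenport there are at least 2|A| - 1 such differences, so
  double counting gives (2|A| - 1)(|A| - 24) \<le> |A|^2, i.e. |A| \<le> 49, which is absurd
  for p > 213.
*)

section \<open>Residues modulo a prime and the Legendre symbol\<close>

locale prime_residues =
  fixes p :: int
  assumes prime: "prime p"
begin

lemma p_pos: "0 < p"
  using prime by (simp add: prime_gt_0_int)

lemma not_dvd_1: "\<not> p dvd 1"
  using prime by (meson not_prime_unit)

lemma finite_residue_filter: "finite {x\<in>{0..<p}. P x}"
  by (rule finite_subset[of _ "{0..<p}"]) auto

lemma dvd_small_eq_0: "p dvd d \<Longrightarrow> \<bar>d\<bar> < p \<Longrightarrow> d = 0"
  using dvd_imp_le_int[of d p] p_pos by force

lemma bij_betw_affine_mod: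
  assumes "\<not> p dvd a"
  shows "bij_betw (\<lambda>x. (a * x + b) mod p) {0..<p} {0..<p}"
proof -
  have "inj_on (\<lambda>x. (a * x + b) mod p) {0..<p}"
  proof (rule inj_onI)
    fix x y assume "x \<in> {0..<p}" "y \<in> {0..<p}" "(a * x + b) mod p = (a * y + b) mod p"
    moreover have "coprime a p"
      using prime_imp_coprime[OF prime assms] by (simp add: coprime_commute)
    moreover have "[a * x = a * y] (mod p)"
      using calculation(3) cong_add_rcancel unfolding cong_def by blast
    ultimately have "[x = y] (mod p)"
      using cong_mult_lcancel by blast
    then show "x = y"
      using \<open>x \<in> {0..<p}\<close> \<open>y \<in> {0..<p}\<close> by (simp add: cong_def)
  qed
  moreover have "(\<lambda>x. (a * x + b) mod p) ` {0..<p} \<subseteq> {0..<p}"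
    using p_pos by auto
  ultimately show ?thesis
    unfolding bij_betw_def using endo_inj_surj[of "{0..<p}"] by simp
qed

lemma sum_affine_mod:
  assumes "\<not> p dvd a"
  shows "(\<Sum>x\<in>{0..<p}. g ((a * x + b) mod p)) = (\<Sum>x\<in>{0..<p}. g x)"
  by (rule sum.reindex_bij_betw[OF bij_betw_affine_mod[OF assms]])

lemma card_affine_preimage:
  assumes "\<not> p dvd a" and "B \<subseteq> {0..<p}"
  shows "card {x\<in>{0..<p}. (a * x + b) mod p \<in> B} = card B"
proof -
  let ?f = "\<lambda>x. (a * x + b) mod p"
  have bij: "bij_betw ?f {0..<p} {0..<p}"
    by (rule bij_betw_affine_mod[OF assms(1)])
  have "?f ` {x\<in>{0..<p}. ?f x \<in> B} = B"
  proof
    show "B \<subseteq> ?f ` {x\<in>{0..<p}. ?f x \<in> B}"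
    proof
      fix c assume "c \<in> B"
      then obtain x where "x \<in> {0..<p}" "c = ?f x"
        using assms(2) bij_betw_imp_surj_on[OF bij] by blast
      then show "c \<in> ?f ` {x\<in>{0..<p}. ?f x \<in> B}"
        using \<open>c \<in> B\<close> by blast
    qed
  qed blast
  moreover have "inj_on ?f {x\<in>{0..<p}. ?f x \<in> B}"
    using bij_betw_imp_inj_on[OF bij] by (rule inj_on_subset) auto
  then have "card (?f ` {x\<in>{0..<p}. ?f x \<in> B}) = card {x\<in>{0..<p}. ?f x \<in> B}"
    by (rule card_image)
  with \<open>?f ` {x\<in>{0..<p}. ?f x \<in> B} = B\<close> show ?thesis
    by simp
qed

lemma card_affine_preimage_le:
  assumes "\<not> p dvd a" and "finite B"
  shows "card {x\<in>{0..<p}. (a * x + b) mod p \<in> B} \<le> card B"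
proof -
  have "{x\<in>{0..<p}. (a * x + b) mod p \<in> B} = {x\<in>{0..<p}. (a * x + b) mod p \<in> B \<inter> {0..<p}}"
    using p_pos by auto
  then show ?thesis
    using card_affine_preimage[OF assms(1), of "B \<inter> {0..<p}" b] card_mono[OF assms(2), of "B \<inter> {0..<p}"]
    by simp
qed

lemma card_affine_image:
  assumes "\<not> p dvd a" and "Y \<subseteq> {0..<p}"
  shows "card ((\<lambda>y. (a * y + b) mod p) ` Y) = card Y"
  by (rule card_image[OF inj_on_subset[OF bij_betw_imp_inj_on[OF bij_betw_affine_mod[OF assms(1)]] assms(2)]])

lemma card_shift_mod:
  assumes "Y \<subseteq> {0..<p}"
  shows "card ((\<lambda>y. (y + e) mod p) ` Y) = card Y"
  using card_affine_image[OF not_dvd_1 assms, of e] by simp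

lemma Legendre_cong:
  assumes "[x = y] (mod p)"
  shows "Legendre x p = Legendre y p"
proof -
  have "QuadRes p x = QuadRes p y" and "[x = 0] (mod p) = [y = 0] (mod p)"
    unfolding QuadRes_def using assms cong_sym cong_trans by blast+
  then show ?thesis
    unfolding Legendre_def by simp
qed

lemma Legendre_mod: "Legendre (x mod p) p = Legendre x p"
  by (rule Legendre_cong) (simp add: cong_def)

lemma Legendre_cases: "Legendre x p = 1 \<or> Legendre x p = 0 \<or> Legendre x p = -1"
  unfolding Legendre_def by auto

lemma Legendre_eq_0_iff: "Legendre x p = 0 \<longleftrightarrow> p dvd x"
  by (simp add: Legendre_def cong_0_iff)

lemma Legendre_square_eq_1: "\<not> p dvd x \<Longrightarrow> Legendre x p * Legendre x p = 1"
  using Legendre_eq_0_iff[of x] Legendre_cases[of x] by auto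

lemma Legendre_1: "Legendre 1 p = 1"
proof -
  have "QuadRes p 1"
    unfolding QuadRes_def by (rule exI[of _ 1]) simp
  then show ?thesis
    using not_dvd_1 by (simp add: Legendre_def cong_0_iff)
qed

lemma coprime_if_in_range: "y \<in> {1..<p} \<Longrightarrow> coprime y p"
  using prime_imp_coprime[OF prime, of y] zdvd_not_zless[of y p] by (auto simp: coprime_commute)

lemma modular_inverse_in_range:
  assumes "y \<in> {1..<p}"
  shows "modular_inverse p y \<in> {1..<p}"
proof -
  have "1 < p"
    using prime by (simp add: prime_gt_1_int)
  then have "0 < modular_inverse p y"
    using mult_modular_inverse_int_pos coprime_if_in_range[OF assms] by blast
  then show ?thesis
    using modular_inverse_int_less[OF p_pos, of y] by simp
qed

lemma modular_inverse_involution: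
  assumes "y \<in> {1..<p}"
  shows "modular_inverse p (modular_inverse p y) = y"
proof (rule modular_inverse_int_eqI)
  show "y \<in> {0..<p}"
    using assms by simp
  show "[modular_inverse p y * y = 1] (mod p)"
    using cong_modular_inverse2[OF coprime_if_in_range[OF assms]] .
qed

lemma bij_betw_modular_inverse: "bij_betw (modular_inverse p) {1..<p} {1..<p}"
  by (rule bij_betwI[where g = "modular_inverse p"])
    (auto simp: modular_inverse_in_range modular_inverse_involution simp del: atLeastLessThan_iff)

end

section \<open>Character sums of the Legendre symbol\<close>

locale odd_prime = prime_residues +
  assumes two_less: "2 < p"
begin

lemma not_dvd_2: "\<not> p dvd 2"
  using two_less by (simp add: zdvd_not_zless)

lemma Legendre_mult: "Legendre (x * y) p = Legendre x p * Legendre y p"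
proof -
  define e where "e = nat ((p - 1) div 2)"
  have euler: "[Legendre z p = z ^ e] (mod p)" for z
    using euler_criterion[of "nat p" z] prime two_less p_pos
    by (simp add: e_def nat_div_distrib nat_diff_distrib)
  have "[Legendre (x * y) p = Legendre x p * Legendre y p] (mod p)"
    using cong_trans[OF euler[of "x * y"], of "Legendre x p * Legendre y p"]
      cong_sym[OF cong_mult[OF euler[of x] euler[of y]]]
    by (simp add: power_mult_distrib)
  then have "p dvd Legendre (x * y) p - Legendre x p * Legendre y p"
    by (simp add: cong_iff_dvd_diff)
  moreover have "\<bar>Legendre (x * y) p - Legendre x p * Legendre y p\<bar> < p"
    using Legendre_cases[of "x * y"] Legendre_cases[of x] Legendre_cases[of y] two_less by auto
  ultimately show ?thesis
    using dvd_small_eq_0 by (metis eq_iff_diff_eq_0)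
qed

lemma Legendre_square_mult: "\<not> p dvd y \<Longrightarrow> Legendre (y * y * x) p = Legendre x p"
  using Legendre_square_eq_1[of y] Legendre_mult[of "y * y" x] Legendre_mult[of y y] by simp

lemma Legendre_eq_minus_1_iff: "Legendre x p = -1 \<longleftrightarrow> \<not> QuadRes p x"
proof -
  have "\<not> QuadRes p x \<Longrightarrow> \<not> [x = 0] (mod p)"
    unfolding QuadRes_def by (metis cong_sym power_zero_numeral)
  then show ?thesis
    unfolding Legendre_def by auto
qed

lemma nonresidue_exists: "\<exists>n. \<not> QuadRes p n"
proof (rule ccontr)
  assume "\<nexists>n. \<not> QuadRes p n"
  define sq where "sq x = x\<^sup>2 mod p" for x
  have "{1..<p} \<subseteq> sq ` {1..<p}"
  proof
    fix a assume a: "a \<in> {1..<p}"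
    obtain y where y: "[y\<^sup>2 = a] (mod p)"
      using \<open>\<nexists>n. \<not> QuadRes p n\<close> unfolding QuadRes_def by blast
    then have "sq (y mod p) = a"
      using a unfolding sq_def cong_def by (simp add: power_mod)
    moreover have "y mod p \<noteq> 0"
      using \<open>sq (y mod p) = a\<close> a unfolding sq_def by auto
    moreover have "0 \<le> y mod p" "y mod p < p"
      using p_pos by simp_all
    ultimately show "a \<in> sq ` {1..<p}"
      by (intro image_eqI[of _ _ "y mod p"]) auto
  qed
  moreover have "sq ` {1..<p} \<subseteq> {1..<p}"
  proof
    fix a assume "a \<in> sq ` {1..<p}"
    then obtain x where x: "x \<in> {1..<p}" and a: "a = sq x"
      by blast
    have "\<not> p dvd x\<^sup>2"
      using x prime prime_dvd_power_int_iff zdvd_not_zless by fastforce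
    moreover have "0 \<le> x\<^sup>2 mod p" "x\<^sup>2 mod p < p"
      using p_pos by simp_all
    ultimately show "a \<in> {1..<p}"
      using a unfolding sq_def by (auto simp: dvd_eq_mod_eq_0)
  qed
  ultimately have "inj_on sq {1..<p}"
    by (intro eq_card_imp_inj_on) auto
  moreover have "sq (p - 1) = sq 1"
    unfolding sq_def by (simp add: power2_eq_square algebra_simps mod_eq_dvd_iff)
  ultimately show False
    using two_less inj_onD[of sq "{1..<p}" "p - 1" 1] by auto
qed

lemma sum_Legendre: "(\<Sum>x\<in>{0..<p}. Legendre x p) = 0"
proof -
  obtain n where n: "\<not> QuadRes p n"
    using nonresidue_exists by blast
  then have "\<not> p dvd n" and Ln: "Legendre n p = -1"
    using Legendre_eq_minus_1_iff[of n] Legendre_eq_0_iff[of n] by auto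
  have "(\<Sum>x\<in>{0..<p}. Legendre x p) = (\<Sum>x\<in>{0..<p}. Legendre ((n * x + 0) mod p) p)"
    using sum_affine_mod[OF \<open>\<not> p dvd n\<close>, of "\<lambda>x. Legendre x p" 0] by simp
  also have "\<dots> = - (\<Sum>x\<in>{0..<p}. Legendre x p)"
    by (simp add: Legendre_mod Legendre_mult Ln sum_negf)
  finally show ?thesis
    by simp
qed

lemma sum_Legendre_affine:
  assumes "\<not> p dvd a"
  shows "(\<Sum>x\<in>{0..<p}. Legendre (a * x + b) p) = 0"
  using sum_affine_mod[OF assms, of "\<lambda>x. Legendre x p" b] sum_Legendre by (simp add: Legendre_mod)

lemma sum_Legendre_quadratic:
  assumes "\<not> p dvd \<delta>"
  shows "(\<Sum>y\<in>{0..<p}. Legendre (y * (y - \<delta>)) p) = -1"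
proof -
  have range: "{0..<p} = insert 0 {1..<p}"
    using p_pos by auto
  have "(\<Sum>y\<in>{0..<p}. Legendre (y * (y - \<delta>)) p) = (\<Sum>y\<in>{1..<p}. Legendre (y * (y - \<delta>)) p)"
    unfolding range by (simp add: Legendre_def)
  also have "\<dots> = (\<Sum>y\<in>{1..<p}. Legendre (1 - \<delta> * modular_inverse p y) p)"
  proof (rule sum.cong[OF refl])
    fix y assume y: "y \<in> {1..<p}"
    define z where "z = modular_inverse p y"
    have "\<not> p dvd z"
      using modular_inverse_in_range[OF y] zdvd_not_zless unfolding z_def by auto
    have "[z * y = 1] (mod p)"
      unfolding z_def using cong_modular_inverse2[OF coprime_if_in_range[OF y]] .
    then have "p dvd (z * y - 1) * (z * y + 1 - \<delta> * z)"
      by (simp add: cong_iff_dvd_diff)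
    moreover have "(z * y - 1) * (z * y + 1 - \<delta> * z) = z * z * (y * (y - \<delta>)) - (1 - \<delta> * z)"
      by (simp add: algebra_simps)
    ultimately have "[z * z * (y * (y - \<delta>)) = 1 - \<delta> * z] (mod p)"
      by (simp add: cong_iff_dvd_diff)
    then have "Legendre (z * z * (y * (y - \<delta>))) p = Legendre (1 - \<delta> * z) p"
      by (rule Legendre_cong)
    then show "Legendre (y * (y - \<delta>)) p = Legendre (1 - \<delta> * modular_inverse p y) p"
      using Legendre_square_mult[OF \<open>\<not> p dvd z\<close>] unfolding z_def by simp
  qed
  also have "\<dots> = (\<Sum>z\<in>{1..<p}. Legendre (1 - \<delta> * z) p)"
    by (rule sum.reindex_bij_betw[OF bij_betw_modular_inverse])
  also have "\<dots> = (\<Sum>z\<in>{0..<p}. Legendre ((- \<delta>) * z + 1) p) - Legendre 1 p"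
    unfolding range by (simp add: algebra_simps)
  also have "\<dots> = -1"
    using sum_Legendre_affine[of "- \<delta>" 1] assms by (simp add: Legendre_1)
  finally show ?thesis .
qed

lemma sum_Legendre_product:
  assumes "\<not> p dvd (\<alpha> - \<beta>)"
  shows "(\<Sum>x\<in>{0..<p}. Legendre (x - \<alpha>) p * Legendre (x - \<beta>) p) = -1"
proof -
  have "(\<Sum>x\<in>{0..<p}. Legendre (x - \<alpha>) p * Legendre (x - \<beta>) p)
      = (\<Sum>y\<in>{0..<p}. Legendre (((1 * y + \<alpha>) mod p - \<alpha>) * ((1 * y + \<alpha>) mod p - \<beta>)) p)"
    using sum_affine_mod[OF not_dvd_1, of "\<lambda>x. Legendre ((x - \<alpha>) * (x - \<beta>)) p" \<alpha>]
    by (simp add: Legendre_mult)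
  also have "\<dots> = (\<Sum>y\<in>{0..<p}. Legendre (y * (y - (\<beta> - \<alpha>))) p)"
  proof (rule sum.cong[OF refl])
    fix y
    have "[((1 * y + \<alpha>) mod p - \<alpha>) * ((1 * y + \<alpha>) mod p - \<beta>) = (y + \<alpha> - \<alpha>) * (y + \<alpha> - \<beta>)] (mod p)"
      by (intro cong_mult cong_diff) (simp_all add: cong_def)
    then show "Legendre (((1 * y + \<alpha>) mod p - \<alpha>) * ((1 * y + \<alpha>) mod p - \<beta>)) p
        = Legendre (y * (y - (\<beta> - \<alpha>))) p"
      using Legendre_cong by (simp add: algebra_simps)
  qed
  also have "\<dots> = -1"
    using assms by (intro sum_Legendre_quadratic) (simp add: dvd_diff_commute)
  finally show ?thesis .
qed

lemma sum_Legendre_square_weight: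
  "(\<Sum>x\<in>{0..<p}. Legendre (x - \<alpha>) p * Legendre (x - \<alpha>) p * g x)
     = (\<Sum>x\<in>{0..<p}. g x) - g (\<alpha> mod p)"
proof -
  have a: "\<alpha> mod p \<in> {0..<p}"
    using p_pos by simp
  have weight: "Legendre (x - \<alpha>) p * Legendre (x - \<alpha>) p = (if x = \<alpha> mod p then 0 else 1)"
    if "x \<in> {0..<p}" for x
    using that Legendre_square_eq_1[of "x - \<alpha>"] Legendre_eq_0_iff[of "x - \<alpha>"]
    by (auto simp: mod_eq_dvd_iff[symmetric])
  have "(\<Sum>x\<in>{0..<p}. Legendre (x - \<alpha>) p * Legendre (x - \<alpha>) p * g x)
      = (\<Sum>x\<in>{0..<p}. if x = \<alpha> mod p then 0 else g x)"
    by (rule sum.cong) (simp_all add: weight)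
  also have "\<dots> = (\<Sum>x\<in>{0..<p}. g x) - g (\<alpha> mod p)"
    using sum.remove[OF _ a, of g] by (simp add: sum.If_cases Diff_eq Int_commute)
  finally show ?thesis .
qed

lemma card_Legendre_sign_pattern:
  assumes "\<not> p dvd (\<alpha> - \<beta>)" and "\<epsilon>\<^sub>1 \<in> {1, -1}" and "\<epsilon>\<^sub>2 \<in> {1, -1}"
  shows "4 * int (card {x\<in>{0..<p}. Legendre (x - \<alpha>) p = \<epsilon>\<^sub>1 \<and> Legendre (x - \<beta>) p = \<epsilon>\<^sub>2})
       = p - 2 - \<epsilon>\<^sub>2 * Legendre (\<alpha> - \<beta>) p - \<epsilon>\<^sub>1 * Legendre (\<beta> - \<alpha>) p - \<epsilon>\<^sub>1 * \<epsilon>\<^sub>2"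
proof -
  define u where "u x = Legendre (x - \<alpha>) p" for x
  define v where "v x = Legendre (x - \<beta>) p" for x
  have "\<not> p dvd (\<beta> - \<alpha>)"
    using assms(1) by (simp add: dvd_diff_commute)
  have u_at_\<beta>: "u (\<beta> mod p) = Legendre (\<beta> - \<alpha>) p" and v_at_\<alpha>: "v (\<alpha> mod p) = Legendre (\<alpha> - \<beta>) p"
    unfolding u_def v_def by (rule Legendre_cong, simp add: cong_def mod_diff_left_eq)+
  have indicator: "(if u x = \<epsilon>\<^sub>1 \<and> v x = \<epsilon>\<^sub>2 then 4 else 0) = (u x * u x + \<epsilon>\<^sub>1 * u x) * (v x * v x + \<epsilon>\<^sub>2 * v x)" for x
    using Legendre_cases[of "x - \<alpha>"] Legendre_cases[of "x - \<beta>"] assms(2,3) unfolding u_def v_def by auto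
  have "4 * int (card {x\<in>{0..<p}. u x = \<epsilon>\<^sub>1 \<and> v x = \<epsilon>\<^sub>2}) = (\<Sum>x\<in>{0..<p}. if u x = \<epsilon>\<^sub>1 \<and> v x = \<epsilon>\<^sub>2 then 4 else 0)"
    by (simp add: sum.If_cases Int_def)
  also have "\<dots> = (\<Sum>x\<in>{0..<p}. u x * u x * (v x * v x)) + \<epsilon>\<^sub>2 * (\<Sum>x\<in>{0..<p}. u x * u x * v x)
       + \<epsilon>\<^sub>1 * (\<Sum>x\<in>{0..<p}. v x * v x * u x) + \<epsilon>\<^sub>1 * \<epsilon>\<^sub>2 * (\<Sum>x\<in>{0..<p}. u x * v x)"
    unfolding indicator by (simp add: sum.distrib sum_distrib_left algebra_simps)
  also have "(\<Sum>x\<in>{0..<p}. u x * u x * (v x * v x)) = p - 2"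
    using sum_Legendre_square_weight[of \<alpha> "\<lambda>x. v x * v x"] sum_Legendre_square_weight[of \<beta> "\<lambda>x. 1"]
      Legendre_square_eq_1[OF assms(1)] v_at_\<alpha> p_pos
    unfolding u_def v_def by simp
  also have "(\<Sum>x\<in>{0..<p}. u x * u x * v x) = - Legendre (\<alpha> - \<beta>) p"
    using sum_Legendre_square_weight[of \<alpha> v] sum_Legendre_affine[OF not_dvd_1, of "- \<beta>"] v_at_\<alpha>
    unfolding u_def v_def by simp
  also have "(\<Sum>x\<in>{0..<p}. v x * v x * u x) = - Legendre (\<beta> - \<alpha>) p"
    using sum_Legendre_square_weight[of \<beta> u] sum_Legendre_affine[OF not_dvd_1, of "- \<alpha>"] u_at_\<beta>
    unfolding u_def v_def by simp
  also have "(\<Sum>x\<in>{0..<p}. u x * v x) = -1"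
    unfolding u_def v_def by (rule sum_Legendre_product[OF assms(1)])
  finally show ?thesis
    unfolding u_def v_def by (simp add: algebra_simps)
qed

lemma mem_QRset_iff: "x \<in> QRset p \<longleftrightarrow> x \<in> {0..<p} \<and> Legendre x p = 1"
  unfolding QRset_def Legendre_def using zdvd_not_zless[of x p] by (cases "x = 0") (auto simp: cong_0_iff)

lemma QRset_subset: "QRset p \<subseteq> {0..<p}"
  using mem_QRset_iff by blast

lemma card_QRset: "2 * int (card (QRset p)) = p - 1"
proof -
  have indicator: "(if Legendre x p = 1 then 2 else 0) = Legendre (x - 0) p * Legendre (x - 0) p * 1 + Legendre (1 * x + 0) p" for x
    using Legendre_cases[of x] by auto
  have "QRset p = {x\<in>{0..<p}. Legendre x p = 1}"
    using mem_QRset_iff by blast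
  then have "2 * int (card (QRset p)) = (\<Sum>x\<in>{0..<p}. if Legendre x p = 1 then 2 else 0)"
    by (simp add: sum.If_cases Int_def)
  also have "\<dots> = p - 1"
    unfolding indicator sum.distrib sum_Legendre_square_weight sum_Legendre_affine[OF not_dvd_1]
    using p_pos by simp
  finally show ?thesis .
qed

end

section \<open>Sumsets and the Cauchy-Davenport theorem\<close>

context prime_residues
begin

definition sumset :: "int set \<Rightarrow> int set \<Rightarrow> int set" where
  "sumset X Y = {(x + y) mod p | x y. x \<in> X \<and> y \<in> Y}"

lemma sumset_subset: "sumset X Y \<subseteq> {0..<p}"
  unfolding sumset_def using p_pos by (smt (verit) atLeastLessThan_iff mem_Collect_eq pos_mod_bound pos_mod_sign subsetI)

lemma sumset_singleton: "sumset X {y} = (\<lambda>x. (x + y) mod p) ` X"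
  unfolding sumset_def by blast

lemma sumset_residues:
  assumes "y \<in> Y"
  shows "sumset {0..<p} Y = {0..<p}"
proof
  show "{0..<p} \<subseteq> sumset {0..<p} Y"
  proof
    fix z assume "z \<in> {0..<p}"
    then have "z = ((z - y) mod p + y) mod p"
      by (simp add: mod_add_left_eq)
    moreover have "(z - y) mod p \<in> {0..<p}"
      using p_pos by simp
    ultimately show "z \<in> sumset {0..<p} Y"
      using assms unfolding sumset_def by blast
  qed
qed (rule sumset_subset)

lemma shift_closed_eq_residues:
  assumes "X \<subseteq> {0..<p}" and "x\<^sub>0 \<in> X" and "\<not> p dvd d"
    and closed: "\<And>x. x \<in> X \<Longrightarrow> (x + d) mod p \<in> X"
  shows "X = {0..<p}"
proof
  have multiples: "(d * int k + x\<^sub>0) mod p \<in> X" for k :: nat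
  proof (induction k)
    case 0
    then show ?case
      using assms(1,2) by auto
  next
    case (Suc k)
    have "((d * int k + x\<^sub>0) mod p + d) mod p = (d * int k + x\<^sub>0 + d) mod p"
      by (rule mod_add_left_eq)
    also have "d * int k + x\<^sub>0 + d = d * int (Suc k) + x\<^sub>0"
      by (simp add: algebra_simps)
    finally have "((d * int k + x\<^sub>0) mod p + d) mod p = (d * int (Suc k) + x\<^sub>0) mod p" .
    then show ?case
      using closed[OF Suc] by simp
  qed
  show "{0..<p} \<subseteq> X"
  proof
    fix z assume "z \<in> {0..<p}"
    then obtain k where "k \<in> {0..<p}" and z: "z = (d * k + x\<^sub>0) mod p"
      using bij_betw_affine_mod[OF assms(3), of x\<^sub>0] unfolding bij_betw_def by blast
    then have "k = int (nat k)"
      by simp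
    then show "z \<in> X"
      using multiples[of "nat k"] z by simp
  qed
qed (fact assms(1))

lemma dyson_transform:
  fixes e :: int
  assumes "X \<subseteq> {0..<p}" and "Y \<subseteq> {0..<p}"
  defines "X' \<equiv> X \<union> (\<lambda>y. (y + e) mod p) ` Y" and "Y' \<equiv> {y\<in>Y. (y + e) mod p \<in> X}"
  shows "card X' + card Y' = card X + card Y" and "sumset X' Y' \<subseteq> sumset X Y"
proof -
  let ?shift = "\<lambda>y. (y + e) mod p"
  have "finite X" "finite (?shift ` Y)"
    using assms(1,2) finite_subset by blast+
  then have "card X' + card (X \<inter> ?shift ` Y) = card X + card (?shift ` Y)"
    unfolding X'_def by (rule card_Un_Int[symmetric])
  moreover have "X \<inter> ?shift ` Y = ?shift ` Y'"
    unfolding Y'_def by auto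
  moreover have "Y' \<subseteq> {0..<p}"
    using assms(2) unfolding Y'_def by auto
  ultimately show "card X' + card Y' = card X + card Y"
    using card_shift_mod assms(2) by simp
  show "sumset X' Y' \<subseteq> sumset X Y"
  proof
    fix z assume "z \<in> sumset X' Y'"
    then obtain x y where z: "z = (x + y) mod p" and x: "x \<in> X'" and y: "y \<in> Y'"
      unfolding sumset_def by blast
    show "z \<in> sumset X Y"
    proof (cases "x \<in> X")
      case True
      then show ?thesis
        using z y unfolding Y'_def sumset_def by blast
    next
      case False
      then obtain w where "w \<in> Y" and "x = (w + e) mod p"
        using x unfolding X'_def by blast
      \<comment> \<open>swap roles: \<open>(w + e) + y = (y + e) + w\<close>, and \<open>y + e\<close> lies in \<open>X\<close>\<close>
      moreover have "z = ((y + e) mod p + w) mod p"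
        using z \<open>x = (w + e) mod p\<close> by (simp add: mod_add_left_eq mod_add_right_eq algebra_simps)
      moreover have "(y + e) mod p \<in> X"
        using y unfolding Y'_def by blast
      ultimately show ?thesis
        unfolding sumset_def by blast
    qed
  qed
qed

lemma sumset_eq_residues_if_rigid:
  assumes "X \<subseteq> {0..<p}" and "X \<noteq> {}" and "Y \<subseteq> {0..<p}"
    and "y\<^sub>0 \<in> Y" and "y\<^sub>1 \<in> Y" and "y\<^sub>0 \<noteq> y\<^sub>1"
    and rigid: "\<And>e. {y\<in>Y. (y + e) mod p \<in> X} \<in> {{}, Y}"
  shows "sumset X Y = {0..<p}"
proof -
  \<comment> \<open>every translate of \<open>Y\<close> meeting \<open>X\<close> lies in \<open>X\<close>, so \<open>X\<close> is invariant under \<open>y\<^sub>1 - y\<^sub>0\<close>\<close>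
  have closed: "(x + (y\<^sub>1 - y\<^sub>0)) mod p \<in> X" if "x \<in> X" for x
  proof -
    define e where "e = (x - y\<^sub>0) mod p"
    have "(y\<^sub>0 + e) mod p = x"
      unfolding e_def using that assms(1) by (auto simp: mod_add_right_eq)
    then have "{y\<in>Y. (y + e) mod p \<in> X} = Y"
      using rigid[of e] assms(4) that by blast
    then have "(y\<^sub>1 + e) mod p \<in> X"
      using assms(5) by blast
    moreover have "(y\<^sub>1 + e) mod p = (x + (y\<^sub>1 - y\<^sub>0)) mod p"
      unfolding e_def by (simp add: mod_add_right_eq algebra_simps)
    ultimately show ?thesis
      by simp
  qed
  have "\<not> p dvd (y\<^sub>1 - y\<^sub>0)"
    using assms(3-6) by (metis (no_types, lifting) atLeastLessThan_iff mod_eq_dvd_iff mod_pos_pos_trivial subsetD)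
  then have "X = {0..<p}"
    using assms(1,2) shift_closed_eq_residues closed by blast
  then show ?thesis
    using sumset_residues[OF assms(4)] by simp
qed

theorem cauchy_davenport:
  assumes "X \<subseteq> {0..<p}" and "Y \<subseteq> {0..<p}" and "X \<noteq> {}" and "Y \<noteq> {}"
  shows "min p (int (card X) + int (card Y) - 1) \<le> int (card (sumset X Y))"
  using assms
proof (induction "card Y" arbitrary: X Y rule: less_induct)
  case less
  have "finite Y" and "finite (sumset X Y)"
    using finite_subset[OF less.prems(2)] finite_subset[OF sumset_subset] by simp_all
  consider "card Y = 1" | y\<^sub>0 y\<^sub>1 where "y\<^sub>0 \<in> Y" "y\<^sub>1 \<in> Y" "y\<^sub>0 \<noteq> y\<^sub>1"
  proof (cases "card Y = 1")
    case False
    moreover have "0 < card Y"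
      using \<open>finite Y\<close> less.prems(4) by (simp add: card_gt_0_iff)
    ultimately have "\<not> card Y \<le> Suc 0"
      by linarith
    then show ?thesis
      using that(2) card_le_Suc0_iff_eq[OF \<open>finite Y\<close>] by blast
  qed
  then show ?case
  proof cases
    case 1
    then obtain y where "Y = {y}"
      by (rule card_1_singletonE)
    then show ?thesis
      using 1 card_shift_mod[OF less.prems(1)] by (simp add: sumset_singleton)
  next
    case 2
    show ?thesis
    proof (cases "\<exists>e. {y\<in>Y. (y + e) mod p \<in> X} \<notin> {{}, Y}")
      case True
      then obtain e where e: "{y\<in>Y. (y + e) mod p \<in> X} \<notin> {{}, Y}"
        by blast
      define X' where "X' = X \<union> (\<lambda>y. (y + e) mod p) ` Y"
      define Y' where "Y' = {y\<in>Y. (y + e) mod p \<in> X}"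
      have "card Y' < card Y"
        using e \<open>finite Y\<close> unfolding Y'_def by (intro psubset_card_mono) auto
      moreover have "X' \<subseteq> {0..<p}" "Y' \<subseteq> {0..<p}" "X' \<noteq> {}" "Y' \<noteq> {}"
        using less.prems e p_pos unfolding X'_def Y'_def by auto
      ultimately have "min p (int (card X') + int (card Y') - 1) \<le> int (card (sumset X' Y'))"
        by (rule less.hyps)
      moreover have "card X' + card Y' = card X + card Y" "sumset X' Y' \<subseteq> sumset X Y"
        using dyson_transform[OF less.prems(1,2), of e] unfolding X'_def Y'_def by blast+
      moreover have "card (sumset X' Y') \<le> card (sumset X Y)"
        using card_mono[OF \<open>finite (sumset X Y)\<close>] calculation(3) .
      ultimately show ?thesis
        by linarith
    next
      case False
      then have "sumset X Y = {0..<p}"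
        using sumset_eq_residues_if_rigid[OF less.prems(1,3,2) 2] by blast
      then show ?thesis
        using p_pos by simp
    qed
  qed
qed

lemma sum_card_representations:
  assumes "A \<subseteq> {0..<p}"
  shows "(\<Sum>d\<in>{0..<p}. card {x\<in>A. (x - d) mod p \<in> A}) = card A * card A"
proof -
  have "finite A"
    using assms finite_subset by blast
  have "(\<Sum>d\<in>{0..<p}. card {x\<in>A. (x - d) mod p \<in> A})
      = (\<Sum>d\<in>{0..<p}. \<Sum>x\<in>A. if (x - d) mod p \<in> A then 1 else 0)"
    using \<open>finite A\<close> by (simp add: sum.If_cases Int_def)
  also have "\<dots> = (\<Sum>x\<in>A. \<Sum>d\<in>{0..<p}. if ((- 1) * d + x) mod p \<in> A then 1 else 0)"
    by (subst sum.swap) simp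
  also have "\<dots> = (\<Sum>x\<in>A. card {d\<in>{0..<p}. ((- 1) * d + x) mod p \<in> A})"
    by (simp add: sum.If_cases Int_def)
  also have "\<dots> = (\<Sum>x\<in>A. card A)"
    using not_dvd_1 by (intro sum.cong refl card_affine_preimage[OF _ assms]) simp
  finally show ?thesis
    by simp
qed

lemma card_dilated_differences:
  assumes "A \<subseteq> {0..<p}" and "A \<noteq> {}" and "\<not> p dvd m" and "2 * card A \<le> p"
  shows "2 * card A - 1 \<le> card {(m * a - m * b) mod p | a b. a \<in> A \<and> b \<in> A}"
proof -
  define X where "X = (\<lambda>a. (m * a + 0) mod p) ` A"
  define Y where "Y = (\<lambda>b. (- m * b + 0) mod p) ` A"
  have "\<not> p dvd - m"
    using assms(3) by simp
  then have "card X = card A" "card Y = card A"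
    unfolding X_def Y_def using card_affine_image[OF assms(3,1)] card_affine_image[OF _ assms(1)] by blast+
  moreover have "X \<subseteq> {0..<p}" "Y \<subseteq> {0..<p}" "X \<noteq> {}" "Y \<noteq> {}"
    unfolding X_def Y_def using assms(1,2) p_pos by auto
  ultimately have "min p (int (card A) + int (card A) - 1) \<le> int (card (sumset X Y))"
    using cauchy_davenport[of X Y] by simp
  also have "min p (int (card A) + int (card A) - 1) = int (2 * card A - 1)"
    using assms(2,4) finite_subset[OF assms(1)] by (simp add: card_gt_0_iff Suc_leI of_nat_diff)
  finally have "2 * card A - 1 \<le> card (sumset X Y)"
    by simp
  also have "\<dots> \<le> card {(m * a - m * b) mod p | a b. a \<in> A \<and> b \<in> A}"
  proof (rule card_mono)
    show "finite {(m * a - m * b) mod p | a b. a \<in> A \<and> b \<in> A}"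
      using finite_image_set2[of "\<lambda>a. a \<in> A" "\<lambda>b. b \<in> A"] finite_subset[OF assms(1)] by simp
    show "sumset X Y \<subseteq> {(m * a - m * b) mod p | a b. a \<in> A \<and> b \<in> A}"
    proof
      fix d assume "d \<in> sumset X Y"
      then obtain a b where "a \<in> A" "b \<in> A" "d = ((m * a + 0) mod p + (- m * b + 0) mod p) mod p"
        unfolding sumset_def X_def Y_def by blast
      moreover have "((m * a + 0) mod p + (- m * b + 0) mod p) mod p = (m * a - m * b) mod p"
        by (simp add: mod_add_eq)
      ultimately show "d \<in> {(m * a - m * b) mod p | a b. a \<in> A \<and> b \<in> A}"
        by auto
    qed
  qed
  finally show ?thesis .
qed

lemma card_bound_from_popular_differences:
  fixes k :: nat
  assumes A: "A \<subseteq> {0..<p}" "A \<noteq> {}" and "\<not> p dvd m" and "2 * card A \<le> p"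
    and popular: "\<And>a b. a \<in> A \<Longrightarrow> b \<in> A \<Longrightarrow> card A \<le> card {x\<in>A. (x - (m * a - m * b)) mod p \<in> A} + k"
  shows "card A \<le> 2 * k + 1"
proof (rule ccontr)
  assume "\<not> card A \<le> 2 * k + 1"
  define n where "n = int (card A)"
  have "n > 2 * k + 1"
    using \<open>\<not> card A \<le> 2 * k + 1\<close> unfolding n_def by simp
  define D where "D = {(m * a - m * b) mod p | a b. a \<in> A \<and> b \<in> A}"
  define r where "r d = int (card {x\<in>A. (x - d) mod p \<in> A})" for d
  have "n - k \<le> r d" if "d \<in> D" for d
  proof -
    obtain a b where "a \<in> A" "b \<in> A" and "d = (m * a - m * b) mod p"
      using \<open>d \<in> D\<close> unfolding D_def by blast
    then have "(x - d) mod p = (x - (m * a - m * b)) mod p" for x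
      by (simp add: mod_diff_right_eq)
    then show ?thesis
      using popular[OF \<open>a \<in> A\<close> \<open>b \<in> A\<close>] unfolding r_def n_def by simp
  qed
  then have "int (card D) * (n - k) \<le> (\<Sum>d\<in>D. r d)"
    using sum_bounded_below[of D "n - k" r] by (simp add: mult.commute)
  also have "\<dots> \<le> (\<Sum>d\<in>{0..<p}. r d)"
    using p_pos by (intro sum_mono2) (auto simp: D_def r_def)
  also have "\<dots> = n * n"
    using arg_cong[OF sum_card_representations[OF A(1)], of int] unfolding r_def n_def of_nat_sum
    by simp
  finally have "int (card D) * (n - k) \<le> n * n" .
  moreover have "(2 * n - 1) * (n - k) \<le> int (card D) * (n - k)"
    using card_dilated_differences[OF assms(1-4)] \<open>n > 2 * k + 1\<close> unfolding D_def n_def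
    by (intro mult_right_mono) simp_all
  moreover have "(2 * n - 1) * (n - k) = n * n + n * (n - (2 * k + 1)) + k"
    by (simp add: algebra_simps)
  moreover have "n * (n - (2 * k + 1)) > 0"
    using \<open>n > 2 * k + 1\<close> by simp
  ultimately show False
    by linarith
qed

end

section \<open>The midpoint digraph\<close>

context odd_prime
begin

definition excluded :: "int set" where
  "excluded = {(p + 3) div 2, (p - 3) div 2}"

lemma Rprime_eq: "Rprime p = QRset p - excluded"
  unfolding Rprime_def excluded_def ..

lemma card_excluded: "card excluded \<le> 2"
  unfolding excluded_def by (simp add: card_insert_if)

lemma card_subset_excluded_preimage:
  assumes "\<not> p dvd a" and "S \<subseteq> excluded \<union> {x\<in>{0..<p}. (a * x + b) mod p \<in> excluded}"
  shows "card S \<le> 4"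
proof -
  have "finite excluded"
    unfolding excluded_def by simp
  then have "card S \<le> card (excluded \<union> {x\<in>{0..<p}. (a * x + b) mod p \<in> excluded})"
    using assms(2) by (intro card_mono finite_UnI finite_residue_filter)
  also have "\<dots> \<le> card excluded + card {x\<in>{0..<p}. (a * x + b) mod p \<in> excluded}"
    by (rule card_Un_le)
  also have "\<dots> \<le> 2 + 2"
    using card_excluded card_affine_preimage_le[OF assms(1) \<open>finite excluded\<close>, of b] by linarith
  finally show ?thesis
    by simp
qed

lemma midpoint_edge:
  assumes x: "x \<in> Rprime p" and y: "y \<in> Rprime p" and z: "(2 * x - y) mod p \<in> Rprime p"
  shows "(x, y) \<in> D_edges p"
proof -
  define z where "z = (2 * x - y) mod p"
  have midpoint: "[2 * x = y + z] (mod p)"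
    unfolding z_def cong_def by (simp add: mod_add_right_eq)
  \<comment> \<open>\<open>y + z = 3\<close> would force \<open>x = 3/2\<close>, which is excluded from \<open>R'\<close>\<close>
  have "\<not> [y + z = 3] (mod p)"
  proof
    assume "[y + z = 3] (mod p)"
    define h where "h = (p + 3) div 2"
    have "odd p"
      using prime_odd_int[OF prime] two_less by simp
    then have "2 * h = p + 3"
      unfolding h_def by (auto elim: oddE)
    then have "[3 = 2 * h] (mod p)"
      by (simp add: cong_def)
    then have "[2 * x = 2 * h] (mod p)"
      using cong_trans[OF midpoint \<open>[y + z = 3] (mod p)\<close>] by (rule cong_trans[rotated])
    moreover have "coprime 2 p"
      using prime_imp_coprime[OF prime not_dvd_2] by (simp add: coprime_commute)
    ultimately have "[x = h] (mod p)"
      using cong_mult_lcancel by blast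
    moreover have "x \<in> {1..<p}"
      using x unfolding Rprime_def QRset_def by auto
    moreover have "h \<in> {0..<p} \<or> h = p"
      using \<open>2 * h = p + 3\<close> two_less by auto
    ultimately have "x = h"
      by (auto simp: cong_def)
    then show False
      using x unfolding Rprime_def h_def by simp
  qed
  then show ?thesis
    unfolding D_edges_def using x y z midpoint z_def by blast
qed

end

text \<open>\<open>(-1/p) = 1\<close> and \<open>(2/p) = -1\<close> hold exactly for \<open>p \<equiv> 5 (mod 8)\<close>.\<close>

locale prime_5_mod_8 = odd_prime +
  assumes minus_one_residue: "QuadRes p (-1)" and two_nonresidue: "\<not> QuadRes p 2"
begin

lemma Legendre_minus: "Legendre (- x) p = Legendre x p"
proof -
  have "Legendre (-1) p = 1"
    using minus_one_residue Legendre_eq_0_iff[of "-1"] Legendre_eq_minus_1_iff[of "-1"]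
      Legendre_cases[of "-1"] not_dvd_1 by auto
  then show ?thesis
    using Legendre_mult[of "-1" x] by simp
qed

lemma Legendre_2: "Legendre 2 p = -1"
  using two_nonresidue Legendre_eq_minus_1_iff by blast

definition out_nbrs :: "int \<Rightarrow> int set" where
  "out_nbrs a = {b\<in>QRset p. (2 * a - b) mod p \<in> QRset p}"

definition in_nbrs :: "int \<Rightarrow> int set" where
  "in_nbrs c = {x\<in>QRset p. (2 * x - c) mod p \<in> QRset p}"

lemma out_nbrs_subset: "out_nbrs a \<subseteq> QRset p"
  unfolding out_nbrs_def by blast

lemma in_nbrs_subset: "in_nbrs c \<subseteq> QRset p"
  unfolding in_nbrs_def by blast

lemma finite_out_nbrs: "finite (out_nbrs a)"
  using finite_subset[OF out_nbrs_subset finite_subset[OF QRset_subset]] by simp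

lemma finite_in_nbrs: "finite (in_nbrs c)"
  using finite_subset[OF in_nbrs_subset finite_subset[OF QRset_subset]] by simp

lemma out_nbrs_reflect:
  assumes "b \<in> out_nbrs a"
  shows "(2 * a - b) mod p \<in> out_nbrs a"
proof -
  have "(2 * a - (2 * a - b) mod p) mod p = b"
    using assms QRset_subset unfolding out_nbrs_def by (auto simp: mod_diff_right_eq)
  then show ?thesis
    using assms unfolding out_nbrs_def by simp
qed

lemma card_out_nbrs:
  assumes "a \<in> QRset p"
  shows "4 * int (card (out_nbrs a)) = p - 1"
proof -
  have "Legendre (2 * a) p = -1"
    using assms Legendre_mult[of 2 a] Legendre_2 by (simp add: mem_QRset_iff)
  then have "\<not> p dvd (0 - 2 * a)"
    using Legendre_eq_0_iff[of "2 * a"] by simp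
  have "out_nbrs a = {x\<in>{0..<p}. Legendre (x - 0) p = 1 \<and> Legendre (x - 2 * a) p = 1}"
    unfolding out_nbrs_def mem_QRset_iff
    using Legendre_minus[of "x - 2 * a" for x] by (auto simp: Legendre_mod)
  then have "4 * int (card (out_nbrs a)) = p - 2 - Legendre (0 - 2 * a) p - Legendre (2 * a - 0) p - 1"
    using card_Legendre_sign_pattern[OF \<open>\<not> p dvd (0 - 2 * a)\<close>, of 1 1] by simp
  then show ?thesis
    using \<open>Legendre (2 * a) p = -1\<close> Legendre_minus[of "2 * a"] by simp
qed

lemma card_in_nbrs:
  assumes "c \<in> QRset p"
  shows "4 * int (card (in_nbrs c)) = p - 1"
proof -
  \<comment> \<open>\<open>h\<close> represents \<open>1/2\<close>, and the factor \<open>2\<close> in \<open>2x - c = 2 (x - c h)\<close> flips the Legendre symbol\<close>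
  define h where "h = (p + 1) div 2"
  have "odd p"
    using prime_odd_int[OF prime] two_less by simp
  then have "2 * h = p + 1" "0 < h" "h < p"
    using two_less unfolding h_def by (auto elim: oddE)
  have "Legendre (2 * x - c) p = - Legendre (x - c * h) p" for x
  proof -
    have "[2 * x - c = 2 * (x - c * h)] (mod p)"
      using \<open>2 * h = p + 1\<close> by (simp add: cong_iff_dvd_diff algebra_simps)
    then have "Legendre (2 * x - c) p = Legendre (2 * (x - c * h)) p"
      by (rule Legendre_cong)
    then show ?thesis
      using Legendre_mult[of 2 "x - c * h"] Legendre_2 by (simp only:)
  qed
  then have "in_nbrs c = {x\<in>{0..<p}. Legendre (x - 0) p = 1 \<and> Legendre (x - c * h) p = -1}"
    unfolding in_nbrs_def mem_QRset_iff by (auto simp: Legendre_mod)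
  moreover have "\<not> p dvd (0 - c * h)"
    using assms \<open>0 < h\<close> \<open>h < p\<close> prime_dvd_mult_iff[OF prime, of c h] zdvd_not_zless[of h p]
    unfolding QRset_def by (auto simp: zdvd_not_zless)
  ultimately have "4 * int (card (in_nbrs c)) = p - 2 + Legendre (0 - c * h) p - Legendre (c * h - 0) p + 1"
    using card_Legendre_sign_pattern[of 0 "c * h" 1 "-1"] by simp
  then show ?thesis
    using Legendre_minus[of "c * h"] by simp
qed

end

locale midpoint_closed = prime_5_mod_8 +
  fixes A :: "int set"
  assumes subset_Rprime: "A \<subseteq> Rprime p"
    and closed: "\<And>a b. a \<in> A \<Longrightarrow> b \<in> Rprime p \<Longrightarrow> (2 * a - b) mod p \<in> Rprime p \<Longrightarrow> b \<in> A"
begin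

lemma subset_residues: "A \<subseteq> {0..<p}"
  using subset_Rprime QRset_subset unfolding Rprime_def by blast

lemma finite_A: "finite A"
  using subset_residues finite_subset by blast

lemma finite_Rprime: "finite (Rprime p)"
  using QRset_subset finite_subset unfolding Rprime_def by blast

lemma card_out_nbrs_Diff:
  assumes "a \<in> A"
  shows "card (out_nbrs a - A) \<le> 4"
proof (rule card_subset_excluded_preimage[OF _ subsetI])
  show "\<not> p dvd - 1"
    using not_dvd_1 by simp
  fix b assume b: "b \<in> out_nbrs a - A"
  then have "b \<in> QRset p" "(2 * a - b) mod p \<in> QRset p" "b \<in> {0..<p}"
    using QRset_subset unfolding out_nbrs_def by auto
  moreover have "b \<notin> Rprime p \<or> (2 * a - b) mod p \<notin> Rprime p"
    using b closed[OF assms] by blast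
  ultimately show "b \<in> excluded \<union> {x\<in>{0..<p}. (- 1 * x + 2 * a) mod p \<in> excluded}"
    unfolding Rprime_eq by auto
qed

lemma card_in_nbrs_Diff:
  assumes "c \<in> Rprime p - A"
  shows "card (in_nbrs c - (Rprime p - A)) \<le> 4"
proof (rule card_subset_excluded_preimage[OF not_dvd_2 subsetI])
  fix x assume x: "x \<in> in_nbrs c - (Rprime p - A)"
  then have "x \<in> QRset p" "(2 * x - c) mod p \<in> QRset p" "x \<in> {0..<p}"
    using QRset_subset unfolding in_nbrs_def by auto
  moreover have "x \<notin> Rprime p \<or> (2 * x - c) mod p \<notin> Rprime p"
    using x assms closed[of x c] by blast
  ultimately show "x \<in> excluded \<union> {x\<in>{0..<p}. (2 * x + - c) mod p \<in> excluded}"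
    unfolding Rprime_eq by auto
qed

lemma card_lower_bound:
  assumes "a \<in> A"
  shows "p - 17 \<le> 4 * int (card A)"
proof -
  have "card (out_nbrs a) \<le> card (out_nbrs a \<inter> A) + card (out_nbrs a - A)"
    using card_Int_Diff[OF finite_out_nbrs] by simp
  moreover have "card (out_nbrs a \<inter> A) \<le> card A"
    by (rule card_mono[OF finite_A]) blast
  moreover have "a \<in> QRset p"
    using assms subset_Rprime unfolding Rprime_def by blast
  ultimately show ?thesis
    using card_out_nbrs[of a] card_out_nbrs_Diff[OF assms] by linarith
qed

lemma card_upper_bound:
  assumes "c \<in> Rprime p - A"
  shows "4 * int (card A) \<le> p + 15"
proof -
  have "card (in_nbrs c) \<le> card (in_nbrs c \<inter> (Rprime p - A)) + card (in_nbrs c - (Rprime p - A))"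
    using card_Int_Diff[OF finite_in_nbrs] by simp
  moreover have "card (in_nbrs c \<inter> (Rprime p - A)) \<le> card (Rprime p - A)"
    by (rule card_mono) (use finite_Rprime in auto)
  moreover have "card A + card (Rprime p - A) \<le> card (QRset p)"
  proof -
    have "card A + card (Rprime p - A) = card (Rprime p)"
      using card_Diff_subset[OF finite_A subset_Rprime] card_mono[OF finite_Rprime subset_Rprime] by simp
    also have "\<dots> \<le> card (QRset p)"
      using finite_subset[OF QRset_subset] unfolding Rprime_def by (intro card_mono) auto
    finally show ?thesis .
  qed
  moreover have "c \<in> QRset p"
    using assms unfolding Rprime_def by blast
  ultimately show ?thesis
    using card_in_nbrs[of c] card_in_nbrs_Diff[OF assms] card_QRset by linarith
qed

lemma card_Diff_out_nbrs:
  assumes "a \<in> A" and "c \<in> Rprime p - A"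
  shows "card (A - out_nbrs a) \<le> 8"
proof -
  have "card (out_nbrs a) \<le> card (A \<inter> out_nbrs a) + card (out_nbrs a - A)"
    using card_Int_Diff[OF finite_out_nbrs, of a A] Int_commute[of "out_nbrs a" A] by simp
  moreover have "card A = card (A \<inter> out_nbrs a) + card (A - out_nbrs a)"
    by (rule card_Int_Diff[OF finite_A])
  moreover have "a \<in> QRset p"
    using assms subset_Rprime unfolding Rprime_def by blast
  ultimately show ?thesis
    using card_out_nbrs[of a] card_out_nbrs_Diff[OF assms(1)] card_upper_bound[OF assms(2)] by linarith
qed

lemma unrepresented_subset:
  "{x\<in>A. (x - (2 * a - 2 * b)) mod p \<notin> A} \<subseteq> (A - out_nbrs a)
     \<union> {x\<in>{0..<p}. (- 1 * x + 2 * a) mod p \<in> out_nbrs a - A}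
     \<union> {x\<in>{0..<p}. (- 1 * x + 2 * a) mod p \<in> A - out_nbrs b}
     \<union> {x\<in>{0..<p}. (1 * x + (2 * b - 2 * a)) mod p \<in> out_nbrs b - A}"
proof
  \<comment> \<open>\<open>x \<mapsto> 2a - x \<mapsto> 2b - (2a - x)\<close>: reflect through \<open>a\<close>, then through \<open>b\<close>\<close>
  fix x assume x: "x \<in> {x\<in>A. (x - (2 * a - 2 * b)) mod p \<notin> A}"
  define y where "y = (2 * a - x) mod p"
  have "(2 * b - y) mod p = (x - (2 * a - 2 * b)) mod p"
    unfolding y_def by (simp add: mod_diff_right_eq algebra_simps)
  moreover have "y \<in> out_nbrs a" if "x \<in> out_nbrs a"
    using out_nbrs_reflect[OF that] unfolding y_def .
  moreover have "(2 * b - y) mod p \<in> out_nbrs b" if "y \<in> out_nbrs b"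
    using out_nbrs_reflect[OF that] .
  ultimately show "x \<in> (A - out_nbrs a)
     \<union> {x\<in>{0..<p}. (- 1 * x + 2 * a) mod p \<in> out_nbrs a - A}
     \<union> {x\<in>{0..<p}. (- 1 * x + 2 * a) mod p \<in> A - out_nbrs b}
     \<union> {x\<in>{0..<p}. (1 * x + (2 * b - 2 * a)) mod p \<in> out_nbrs b - A}"
    using x subset_residues unfolding y_def by (auto simp: algebra_simps)
qed

lemma popular_differences:
  assumes "a \<in> A" and "b \<in> A" and "c \<in> Rprime p - A"
  shows "card A \<le> card {x\<in>A. (x - (2 * a - 2 * b)) mod p \<in> A} + 24"
proof -
  define G where "G = {x\<in>A. (x - (2 * a - 2 * b)) mod p \<in> A}"
  define B\<^sub>1 where "B\<^sub>1 = {x\<in>{0..<p}. (- 1 * x + 2 * a) mod p \<in> out_nbrs a - A}"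
  define B\<^sub>2 where "B\<^sub>2 = {x\<in>{0..<p}. (- 1 * x + 2 * a) mod p \<in> A - out_nbrs b}"
  define B\<^sub>3 where "B\<^sub>3 = {x\<in>{0..<p}. (1 * x + (2 * b - 2 * a)) mod p \<in> out_nbrs b - A}"
  have "\<not> p dvd - 1"
    using not_dvd_1 by simp
  have "A - G = {x\<in>A. (x - (2 * a - 2 * b)) mod p \<notin> A}"
    unfolding G_def by blast
  then have "card (A - G) \<le> card ((A - out_nbrs a) \<union> B\<^sub>1 \<union> B\<^sub>2 \<union> B\<^sub>3)"
    using unrepresented_subset[of a b] unfolding B\<^sub>1_def B\<^sub>2_def B\<^sub>3_def
    by (intro card_mono finite_UnI finite_residue_filter finite_Diff finite_A) simp_all
  also have "\<dots> \<le> card (A - out_nbrs a) + card B\<^sub>1 + card B\<^sub>2 + card B\<^sub>3"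
    by (meson add_mono card_Un_le order_trans le_refl)
  moreover have "card B\<^sub>1 \<le> 4" "card B\<^sub>2 \<le> 8" "card B\<^sub>3 \<le> 4"
    unfolding B\<^sub>1_def B\<^sub>2_def B\<^sub>3_def
    using card_affine_preimage_le[OF \<open>\<not> p dvd - 1\<close>, of "out_nbrs a - A" "2 * a"]
      card_affine_preimage_le[OF \<open>\<not> p dvd - 1\<close>, of "A - out_nbrs b" "2 * a"]
      card_affine_preimage_le[OF not_dvd_1, of "out_nbrs b - A" "2 * b - 2 * a"]
      card_out_nbrs_Diff[OF assms(1)] card_out_nbrs_Diff[OF assms(2)] card_Diff_out_nbrs[OF assms(2,3)]
      finite_out_nbrs finite_A by force+
  moreover have "card A = card G + card (A - G)"
    using card_Int_Diff[OF finite_A, of G] unfolding G_def by (simp add: Int_absorb1)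
  ultimately show ?thesis
    using card_Diff_out_nbrs[OF assms(1,3)] unfolding G_def by linarith
qed

lemma closed_eq_Rprime:
  assumes "A \<noteq> {}" and "213 < p"
  shows "A = Rprime p"
proof (rule ccontr)
  assume "A \<noteq> Rprime p"
  then obtain c where c: "c \<in> Rprime p - A"
    using subset_Rprime by blast
  obtain a where "a \<in> A"
    using assms(1) by blast
  have "card A \<le> 2 * 24 + 1"
  proof (rule card_bound_from_popular_differences[OF subset_residues assms(1) not_dvd_2])
    show "2 * card A \<le> p"
      using card_upper_bound[OF c] assms(2) by linarith
    show "card A \<le> card {x\<in>A. (x - (2 * a - 2 * b)) mod p \<in> A} + 24" if "a \<in> A" "b \<in> A" for a b
      using popular_differences[OF that c] .
  qed
  then show False
    using card_lower_bound[OF \<open>a \<in> A\<close>] assms(2) by linarith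
qed

end

theorem lemma2p6:
  fixes p :: int
  assumes "prime p" and "p \<ge> 1711"
    and "QuadRes p (-1)" and "\<not> QuadRes p 2" and "\<not> QuadRes p 3"
  shows "\<forall>u \<in> Rprime p. \<forall>v \<in> Rprime p. (u, v) \<in> (D_edges p)\<^sup>*"
proof (intro ballI)
  interpret prime_5_mod_8 p
    using assms by unfold_locales auto
  fix u v assume u: "u \<in> Rprime p" and v: "v \<in> Rprime p"
  define A where "A = {w\<in>Rprime p. (u, w) \<in> (D_edges p)\<^sup>*}"
  have "b \<in> A" if "a \<in> A" "b \<in> Rprime p" "(2 * a - b) mod p \<in> Rprime p" for a b
  proof -
    have "(u, a) \<in> (D_edges p)\<^sup>*" "(a, b) \<in> D_edges p"
      using that midpoint_edge[of a b] unfolding A_def by auto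
    then show ?thesis
      using that(2) unfolding A_def by simp
  qed
  then interpret midpoint_closed p A
    by unfold_locales (auto simp: A_def)
  have "A \<noteq> {}"
    using u unfolding A_def by blast
  then have "A = Rprime p"
    using closed_eq_Rprime assms(2) by simp
  then show "(u, v) \<in> (D_edges p)\<^sup>*"
    using v unfolding A_def by blast
qed

end
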